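(* Let $G$ be a connected graph of order $n\geq 2$. The following are pairwise equivalent: (i) $\mathrm{ldim}_f(G)=\frac{n}{2}$; (ii) every vertex of $G$ has a true twin, i.e. for every $u\in V(G)$ there is $v\neq u$ with $N[u]=N[v]$; (iii) there exist a graph $H$ and a family $\mathcal I=\{I_v\}_{v\in V(H)}$ of complete graphs each of order at least $2$ such that $G$ is isomorphic to the generalized lexicographic product $H[\mathcal I]$.
   Context: All graphs are finite, simple and connected; $d(x,y)$ is the shortest-path distance. For an edge $uv$, $L(uv)=\{x\in V(G): d(u,x)\neq d(v,x)\}$. A function $f:V(G)\to[0,1]$ is a local resolving function of $G$ if $\sum_{x\in L(uv)}f(x)\geq 1$ for every edge $uv$; $\mathrm{ldim}_f(G)$ is the minimum of $\sum_{v\in V(G)}f(v)$ over all local resolving functions. $N[u]$ is the closed neighborhood of $u$. Given a graph $H$ and graphs $I_v$ indexed by $v\in V(H)$, the generalized lexicographic product $H[\mathcal I]$ has vertex set $\{(v,w): v\in V(H), w\in V(I_v)\}$, with $(v_1,w_1)(v_2,w_2)$ an edge iff $v_1v_2\in E(H)$, or $v_1=v_2$ and $w_1w_2\in E(I_{v_1})$. *)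

theory Defs
  imports Complex_Main
begin

definition simple_graph :: "'a set \<Rightarrow> ('a \<Rightarrow> 'a \<Rightarrow> bool) \<Rightarrow> bool" where
  "simple_graph V E \<longleftrightarrow> finite V \<and> (\<forall>x y. E x y \<longrightarrow> x \<in> V \<and> y \<in> V)
     \<and> (\<forall>x y. E x y \<longrightarrow> E y x) \<and> (\<forall>x. \<not> E x x)"

definition walk :: "'a set \<Rightarrow> ('a \<Rightarrow> 'a \<Rightarrow> bool) \<Rightarrow> nat \<Rightarrow> 'a \<Rightarrow> 'a \<Rightarrow> bool" where
  "walk V E n x y \<longleftrightarrow> (\<exists>p. length p = Suc n \<and> hd p = x \<and> last p = y \<and> set p \<subseteq> V
      \<and> (\<forall>i<n. E (p ! i) (p ! Suc i)))"

definition connected_graph :: "'a set \<Rightarrow> ('a \<Rightarrow> 'a \<Rightarrow> bool) \<Rightarrow> bool" where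
  "connected_graph V E \<longleftrightarrow> simple_graph V E \<and> V \<noteq> {}
     \<and> (\<forall>x\<in>V. \<forall>y\<in>V. \<exists>n. walk V E n x y)"

definition gdist :: "'a set \<Rightarrow> ('a \<Rightarrow> 'a \<Rightarrow> bool) \<Rightarrow> 'a \<Rightarrow> 'a \<Rightarrow> nat" where
  "gdist V E x y = (LEAST n. walk V E n x y)"

definition Lset :: "'a set \<Rightarrow> ('a \<Rightarrow> 'a \<Rightarrow> bool) \<Rightarrow> 'a \<Rightarrow> 'a \<Rightarrow> 'a set" where
  "Lset V E u v = {x \<in> V. gdist V E u x \<noteq> gdist V E v x}"

definition local_resolving_function ::
  "'a set \<Rightarrow> ('a \<Rightarrow> 'a \<Rightarrow> bool) \<Rightarrow> ('a \<Rightarrow> real) \<Rightarrow> bool" where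
  "local_resolving_function V E f \<longleftrightarrow> (\<forall>x\<in>V. 0 \<le> f x \<and> f x \<le> 1)
     \<and> (\<forall>u v. E u v \<longrightarrow> (\<Sum>x\<in>Lset V E u v. f x) \<ge> 1)"

text \<open>fractional local metric dimension: the minimum (here Inf, which is attained)
  of the total weight over all local resolving functions\<close>
definition ldim_f :: "'a set \<Rightarrow> ('a \<Rightarrow> 'a \<Rightarrow> bool) \<Rightarrow> real" where
  "ldim_f V E = Inf {(\<Sum>v\<in>V. f v) | f. local_resolving_function V E f}"

definition closed_nbhd :: "'a set \<Rightarrow> ('a \<Rightarrow> 'a \<Rightarrow> bool) \<Rightarrow> 'a \<Rightarrow> 'a set" where
  "closed_nbhd V E u = insert u {v \<in> V. E u v}"

definition complete_graph :: "'a set \<Rightarrow> ('a \<Rightarrow> 'a \<Rightarrow> bool) \<Rightarrow> bool" where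
  "complete_graph V E \<longleftrightarrow> simple_graph V E \<and> (\<forall>x\<in>V. \<forall>y\<in>V. x \<noteq> y \<longrightarrow> E x y)"

text \<open>generalized lexicographic product H[I]; I v = (vertex set, adjacency) of I_v\<close>
definition glex_verts :: "'b set \<Rightarrow> ('b \<Rightarrow> 'c set \<times> ('c \<Rightarrow> 'c \<Rightarrow> bool)) \<Rightarrow> ('b \<times> 'c) set" where
  "glex_verts VH I = {(v, w). v \<in> VH \<and> w \<in> fst (I v)}"

definition glex_edge :: "'b set \<Rightarrow> ('b \<Rightarrow> 'b \<Rightarrow> bool) \<Rightarrow> ('b \<Rightarrow> 'c set \<times> ('c \<Rightarrow> 'c \<Rightarrow> bool))
    \<Rightarrow> 'b \<times> 'c \<Rightarrow> 'b \<times> 'c \<Rightarrow> bool" where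
  "glex_edge VH EH I p q \<longleftrightarrow> p \<in> glex_verts VH I \<and> q \<in> glex_verts VH I \<and>
     (EH (fst p) (fst q) \<or> (fst p = fst q \<and> snd (I (fst p)) (snd p) (snd q)))"

definition graph_iso :: "'a set \<Rightarrow> ('a \<Rightarrow> 'a \<Rightarrow> bool) \<Rightarrow> 'b set \<Rightarrow> ('b \<Rightarrow> 'b \<Rightarrow> bool) \<Rightarrow> bool" where
  "graph_iso V E V' E' \<longleftrightarrow> (\<exists>\<phi>. bij_betw \<phi> V V' \<and> (\<forall>x\<in>V. \<forall>y\<in>V. E x y \<longleftrightarrow> E' (\<phi> x) (\<phi> y)))"

end

theory Submission
  imports Defs
begin

text \<open>An edge is always resolved by its two endpoints. If \<open>u\<close> and \<open>v\<close> are true twins, every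
  other vertex is equidistant from them, so \<open>L(uv) = {u, v}\<close> and the weights of twins sum to at
  least 1. When every vertex has a twin, pairing each vertex of weight below 1/2 with a twin (an
  injective pairing, since two such vertices cannot be twins of each other) shows that every
  local resolving function has weight at least n/2, which the constant 1/2 attains. If \<open>u\<close> has no
  twin, every edge at \<open>u\<close> has a third vertex in its \<open>L\<close>-set, one adjacent to exactly one
  endpoint, so weight 0 at \<open>u\<close> and 1/2 elsewhere still resolves locally.

  Being true twins is an equivalence whose classes are cliques, and adjacency between two classes
  does not depend on the representatives. Hence \<open>G\<close> is the lexicographic product of its quotient
  by the twin classes with complete fibres; conversely, in \<open>H[I]\<close> any two vertices of the same
  fibre are true twins.\<close>

lemma pair_le_sum:
  fixes f :: "'a \<Rightarrow> real"
  assumes "finite A" "\<forall>x\<in>A. 0 \<le> f x" "p \<in> A" "q \<in> A" "p \<noteq> q"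
  shows "f p + f q \<le> sum f A"
  using sum_mono2[OF assms(1), of "{p, q}" f] assms by auto

text \<open>Each negative term is matched, injectively, with a partner of the same key whose term
  compensates it.\<close>
lemma sum_nonneg_if_pairs_nonneg:
  fixes g :: "'a \<Rightarrow> real" and k :: "'a \<Rightarrow> 'b"
  assumes fin: "finite A"
    and partner: "\<And>x. x \<in> A \<Longrightarrow> \<exists>y\<in>A. y \<noteq> x \<and> k y = k x"
    and pair: "\<And>x y. x \<in> A \<Longrightarrow> y \<in> A \<Longrightarrow> x \<noteq> y \<Longrightarrow> k x = k y \<Longrightarrow> 0 \<le> g x + g y"
  shows "0 \<le> sum g A"
proof -
  have "\<forall>x\<in>A. \<exists>y. y \<in> A \<and> y \<noteq> x \<and> k y = k x" using partner by blast
  then obtain t where t: "\<And>x. x \<in> A \<Longrightarrow> t x \<in> A \<and> t x \<noteq> x \<and> k (t x) = k x"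
    using bchoice by metis
  define N where "N = {x\<in>A. g x < 0}"
  have "N \<subseteq> A" unfolding N_def by blast
  have comp: "0 \<le> g x + g (t x)" if "x \<in> A" for x
    using pair[OF that, of "t x"] t[OF that] by argo
  have "inj_on t N"
  proof (rule inj_onI)
    fix x y assume x: "x \<in> N" and y: "y \<in> N" and txy: "t x = t y"
    show "x = y"
    proof (rule ccontr)
      assume "x \<noteq> y"
      moreover have "k x = k y" using t[of x] t[of y] x y txy \<open>N \<subseteq> A\<close> by (metis subsetD)
      ultimately have "0 \<le> g x + g y" using pair x y \<open>N \<subseteq> A\<close> by blast
      then show False using x y unfolding N_def by simp
    qed
  qed
  moreover have tN: "t ` N \<subseteq> A - N"
  proof
    fix z assume "z \<in> t ` N"
    then obtain x where "x \<in> N" "z = t x" by blast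
    then show "z \<in> A - N" using comp[of x] t[of x] unfolding N_def by auto
  qed
  ultimately have "(\<Sum>x\<in>N. g (t x)) \<le> (\<Sum>x\<in>A - N. g x)"
  proof -
    have "(\<Sum>x\<in>t ` N. g x) \<le> (\<Sum>x\<in>A - N. g x)"
      by (rule sum_mono2) (use fin tN in \<open>auto simp: N_def\<close>)
    then show ?thesis using sum.reindex[OF \<open>inj_on t N\<close>, of g] by simp
  qed
  moreover have "0 \<le> (\<Sum>x\<in>N. g x) + (\<Sum>x\<in>N. g (t x))"
    using comp \<open>N \<subseteq> A\<close> sum.distrib[of g "g \<circ> t" N] sum_nonneg[of N "\<lambda>x. g x + g (t x)"]
    by auto
  moreover have "sum g A = sum g (A - N) + sum g N"
    by (rule sum.subset_diff[OF \<open>N \<subseteq> A\<close> fin])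
  ultimately show ?thesis by linarith
qed

lemma walk_0_iff: "walk V E 0 x y \<longleftrightarrow> x = y \<and> x \<in> V"
proof
  assume "walk V E 0 x y"
  then obtain p where "length p = Suc 0" "hd p = x" "last p = y" "set p \<subseteq> V"
    unfolding walk_def by auto
  then show "x = y \<and> x \<in> V" by (auto simp: length_Suc_conv)
next
  assume "x = y \<and> x \<in> V"
  then show "walk V E 0 x y" unfolding walk_def by (intro exI[of _ "[x]"]) auto
qed

locale sgraph =
  fixes V :: "'a set" and E :: "'a \<Rightarrow> 'a \<Rightarrow> bool"
  assumes simple: "simple_graph V E"
begin

lemma edge_in_V: "E x y \<Longrightarrow> x \<in> V \<and> y \<in> V"
  using simple unfolding simple_graph_def by blast

lemma edge_sym: "E x y \<Longrightarrow> E y x"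
  using simple unfolding simple_graph_def by blast

lemma edge_irrefl: "\<not> E x x"
  using simple unfolding simple_graph_def by blast

lemma finite_V: "finite V"
  using simple unfolding simple_graph_def by blast

lemma walk_Suc_iff: "walk V E (Suc n) x y \<longleftrightarrow> (\<exists>z. E x z \<and> walk V E n z y)"
proof
  assume "walk V E (Suc n) x y"
  then obtain p where p: "length p = Suc (Suc n)" "hd p = x" "last p = y" "set p \<subseteq> V"
    "\<forall>i<Suc n. E (p ! i) (p ! Suc i)"
    unfolding walk_def by blast
  obtain a q where pq: "p = a # q" using p(1) by (cases p) auto
  have q: "length q = Suc n" using p(1) pq by simp
  then have "q \<noteq> []" by auto
  have "E x (hd q)" using p(5)[rule_format, of 0] pq p(2) \<open>q \<noteq> []\<close> by (simp add: hd_conv_nth)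
  moreover have "walk V E n (hd q) y"
    unfolding walk_def
  proof (intro exI[of _ q] conjI allI impI)
    show "last q = y" using p(3) pq \<open>q \<noteq> []\<close> by simp
    show "set q \<subseteq> V" using p(4) pq by simp
    fix i assume "i < n"
    then show "E (q ! i) (q ! Suc i)" using p(5)[rule_format, of "Suc i"] pq by simp
  qed (use q in auto)
  ultimately show "\<exists>z. E x z \<and> walk V E n z y" by blast
next
  assume "\<exists>z. E x z \<and> walk V E n z y"
  then obtain q where e: "E x (hd q)" and q: "length q = Suc n" "last q = y" "set q \<subseteq> V"
    "\<forall>i<n. E (q ! i) (q ! Suc i)"
    unfolding walk_def by blast
  have "q \<noteq> []" using q(1) by auto
  show "walk V E (Suc n) x y"
    unfolding walk_def
  proof (intro exI[of _ "x # q"] conjI allI impI)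
    fix i assume "i < Suc n"
    then show "E ((x # q) ! i) ((x # q) ! Suc i)"
      using e q(4) \<open>q \<noteq> []\<close> by (cases i) (auto simp: hd_conv_nth)
  qed (use q \<open>q \<noteq> []\<close> edge_in_V[OF e] in auto)
qed

lemma walk_1_iff: "walk V E 1 x y \<longleftrightarrow> E x y"
proof -
  have "walk V E 1 x y \<longleftrightarrow> (\<exists>z. E x z \<and> z = y \<and> z \<in> V)"
    using walk_Suc_iff[of 0 x y] by (simp add: walk_0_iff)
  then show ?thesis using edge_in_V by blast
qed

lemma gdist_le: "walk V E n x y \<Longrightarrow> gdist V E x y \<le> n"
  unfolding gdist_def by (rule Least_le)

lemma gdist_self: "x \<in> V \<Longrightarrow> gdist V E x x = 0"
  using gdist_le[of 0 x x] by (simp add: walk_0_iff)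

lemma gdist_edge: "E x y \<Longrightarrow> gdist V E x y = 1"
proof -
  assume e: "E x y"
  then have w: "walk V E 1 x y" using walk_1_iff by simp
  have "\<not> walk V E 0 x y" using e edge_irrefl walk_0_iff by metis
  then have "gdist V E x y \<noteq> 0" using w unfolding gdist_def by (metis LeastI)
  with gdist_le[OF w] show ?thesis by linarith
qed

lemma mem_closed_nbhd_iff: "b \<in> closed_nbhd V E u \<longleftrightarrow> b = u \<or> E u b"
  unfolding closed_nbhd_def using edge_in_V by auto

lemma true_twins_adjacent:
  "closed_nbhd V E u = closed_nbhd V E v \<Longrightarrow> u \<noteq> v \<Longrightarrow> E u v"
  using mem_closed_nbhd_iff by metis

lemma edge_closed_nbhd_transfer:
  "E x y \<Longrightarrow> closed_nbhd V E x = closed_nbhd V E x' \<Longrightarrow> x' \<noteq> y \<Longrightarrow> E x' y"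
  using mem_closed_nbhd_iff by metis

lemma edge_true_twins_transfer:
  assumes "E x' y'" "closed_nbhd V E x' = closed_nbhd V E x" "closed_nbhd V E y' = closed_nbhd V E y"
    and "closed_nbhd V E x \<noteq> closed_nbhd V E y"
  shows "E x y"
proof -
  have "E x y'" using edge_closed_nbhd_transfer assms by metis
  then show "E x y" using edge_closed_nbhd_transfer[OF edge_sym] edge_sym assms by metis
qed

lemma Lset_edge_endpoints: "E a b \<Longrightarrow> a \<in> Lset V E a b \<and> b \<in> Lset V E a b"
  unfolding Lset_def using gdist_self gdist_edge edge_sym edge_in_V by fastforce

lemma local_resolving_const_half: "local_resolving_function V E (\<lambda>_. 1/2)"
  unfolding local_resolving_function_def
proof (intro conjI allI impI)
  fix a b assume e: "E a b"
  have "finite (Lset V E a b)" unfolding Lset_def using finite_V by simp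
  then have "1/2 + 1/2 \<le> (\<Sum>x\<in>Lset V E a b. 1/2 :: real)"
    by (rule pair_le_sum[where p = a and q = b])
      (use Lset_edge_endpoints[OF e] e edge_irrefl in auto)
  then show "1 \<le> (\<Sum>x\<in>Lset V E a b. 1/2 :: real)" by simp
qed simp

end

lemma ldim_f_le:
  assumes "local_resolving_function V E f"
  shows "ldim_f V E \<le> (\<Sum>v\<in>V. f v)"
proof -
  have "bdd_below {(\<Sum>v\<in>V. f v) | f. local_resolving_function V E f}"
    unfolding bdd_below_def local_resolving_function_def
    by (rule exI[of _ 0]) (auto intro!: sum_nonneg)
  then show ?thesis unfolding ldim_f_def using assms by (intro cInf_lower) blast+
qed

definition has_true_twin :: "'a set \<Rightarrow> ('a \<Rightarrow> 'a \<Rightarrow> bool) \<Rightarrow> 'a \<Rightarrow> bool" where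
  "has_true_twin V E u \<longleftrightarrow> (\<exists>v\<in>V. v \<noteq> u \<and> closed_nbhd V E u = closed_nbhd V E v)"

locale cgraph =
  fixes V :: "'a set" and E :: "'a \<Rightarrow> 'a \<Rightarrow> bool"
  assumes connected: "connected_graph V E"

sublocale cgraph \<subseteq> sgraph
  using connected by unfold_locales (simp add: connected_graph_def)

context cgraph
begin

lemma gdist_walk: "x \<in> V \<Longrightarrow> y \<in> V \<Longrightarrow> walk V E (gdist V E x y) x y"
  unfolding gdist_def using connected unfolding connected_graph_def by (meson LeastI_ex)

lemma gdist_eq_1_iff: "x \<in> V \<Longrightarrow> y \<in> V \<Longrightarrow> gdist V E x y = 1 \<longleftrightarrow> E x y"
  using gdist_walk[of x y] walk_1_iff gdist_edge by metis

lemma gdist_le_true_twin: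
  assumes twins: "closed_nbhd V E u = closed_nbhd V E v"
    and "v \<in> V" "x \<in> V" "x \<noteq> v"
  shows "gdist V E u x \<le> gdist V E v x"
proof -
  obtain m where m: "gdist V E v x = Suc m"
    using gdist_walk[of v x] walk_0_iff assms by (metis not0_implies_Suc)
  then obtain b where "E v b" and wb: "walk V E m b x"
    using gdist_walk[of v x] walk_Suc_iff assms by metis
  then have "b = u \<or> E u b" using twins mem_closed_nbhd_iff by metis
  then have "walk V E m u x \<or> walk V E (Suc m) u x" using wb walk_Suc_iff by blast
  then show ?thesis using gdist_le m by fastforce
qed

lemma gdist_true_twins_eq:
  "closed_nbhd V E u = closed_nbhd V E v \<Longrightarrow> u \<in> V \<Longrightarrow> v \<in> V \<Longrightarrow> x \<in> V
    \<Longrightarrow> x \<noteq> u \<Longrightarrow> x \<noteq> v \<Longrightarrow> gdist V E u x = gdist V E v x"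
  using gdist_le_true_twin[of u v x] gdist_le_true_twin[of v u x] by simp

lemma Lset_true_twins:
  "closed_nbhd V E u = closed_nbhd V E v \<Longrightarrow> u \<in> V \<Longrightarrow> v \<in> V \<Longrightarrow> Lset V E u v \<subseteq> {u, v}"
  unfolding Lset_def using gdist_true_twins_eq by blast

lemma Lset_edge_not_twins:
  assumes e: "E a b" and not_twins: "closed_nbhd V E a \<noteq> closed_nbhd V E b"
  shows "\<exists>x\<in>Lset V E a b. x \<noteq> a \<and> x \<noteq> b"
proof -
  obtain x where "x \<in> closed_nbhd V E a \<longleftrightarrow> x \<notin> closed_nbhd V E b" using not_twins by blast
  then have x: "x \<noteq> a" "x \<noteq> b" "E a x \<longleftrightarrow> \<not> E b x"
    using mem_closed_nbhd_iff e edge_sym by metis+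
  then have "x \<in> V" using edge_in_V by blast
  then have "gdist V E a x \<noteq> gdist V E b x"
    using x gdist_eq_1_iff edge_in_V[OF e] by metis
  then show ?thesis using x \<open>x \<in> V\<close> unfolding Lset_def by blast
qed

lemma true_twins_weight:
  assumes lrf: "local_resolving_function V E f" and "x \<in> V" "y \<in> V" "x \<noteq> y"
    and twins: "closed_nbhd V E x = closed_nbhd V E y"
  shows "1 \<le> f x + f y"
proof -
  have "\<forall>z\<in>V. 0 \<le> f z" using lrf unfolding local_resolving_function_def by blast
  have "1 \<le> (\<Sum>z\<in>Lset V E x y. f z)"
    using lrf true_twins_adjacent[OF twins \<open>x \<noteq> y\<close>] unfolding local_resolving_function_def by blast
  also have "\<dots> \<le> (\<Sum>z\<in>{x, y}. f z)"
    by (rule sum_mono2) (use \<open>\<forall>z\<in>V. 0 \<le> f z\<close> assms Lset_true_twins[OF twins] in auto)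
  finally show ?thesis using \<open>x \<noteq> y\<close> by simp
qed

lemma local_resolving_drop_twinless:
  assumes "u \<in> V" and twinless: "\<not> has_true_twin V E u"
  shows "local_resolving_function V E (\<lambda>x. if x = u then 0 else 1/2)"
    (is "local_resolving_function V E ?f")
  unfolding local_resolving_function_def
proof (intro conjI allI impI)
  fix a b assume e: "E a b"
  obtain p q where pq: "p \<in> Lset V E a b" "q \<in> Lset V E a b" "p \<noteq> q" "p \<noteq> u" "q \<noteq> u"
  proof (cases "u = a \<or> u = b")
    case True
    have "a \<noteq> b" using e edge_irrefl by blast
    have "\<forall>v\<in>V. v \<noteq> u \<longrightarrow> closed_nbhd V E u \<noteq> closed_nbhd V E v"
      using twinless unfolding has_true_twin_def by blast
    then have "closed_nbhd V E a \<noteq> closed_nbhd V E b"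
      using True \<open>a \<noteq> b\<close> edge_in_V[OF e] by auto
    then obtain x where "x \<in> Lset V E a b" "x \<noteq> a" "x \<noteq> b" using Lset_edge_not_twins e by blast
    then show ?thesis
      using that[of x b] that[of x a] True Lset_edge_endpoints[OF e] \<open>a \<noteq> b\<close> by (cases "u = a") auto
  next
    case False
    then show ?thesis using that[of a b] Lset_edge_endpoints[OF e] e edge_irrefl by auto
  qed
  have "finite (Lset V E a b)" unfolding Lset_def using finite_V by simp
  then have "?f p + ?f q \<le> (\<Sum>x\<in>Lset V E a b. ?f x)"
    by (rule pair_le_sum) (use pq in auto)
  then show "1 \<le> (\<Sum>x\<in>Lset V E a b. ?f x)" using pq by simp
qed simp

lemma ldim_f_less_if_twinless:
  assumes "u \<in> V" "\<not> has_true_twin V E u"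
  shows "ldim_f V E < real (card V) / 2"
proof -
  have "ldim_f V E \<le> (\<Sum>x\<in>V. if x = u then 0 else 1/2)"
    by (rule ldim_f_le[OF local_resolving_drop_twinless[OF assms]])
  also have "\<dots> = (if u = u then 0 else 1/2) + (\<Sum>x\<in>V - {u}. if x = u then 0 else 1/2)"
    by (rule sum.remove[OF finite_V \<open>u \<in> V\<close>])
  also have "\<dots> = (\<Sum>x\<in>V - {u}. 1/2)"
    by (simp cong: sum.cong_simp)
  also have "\<dots> = real (card V - 1) / 2"
    using \<open>u \<in> V\<close> finite_V by simp
  also have "\<dots> < real (card V) / 2"
    using \<open>u \<in> V\<close> finite_V card_gt_0_iff[of V] by (auto simp: of_nat_diff)
  finally show ?thesis .
qed

lemma ldim_f_eq_if_all_twins: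
  assumes twins: "\<forall>u\<in>V. has_true_twin V E u"
  shows "ldim_f V E = real (card V) / 2"
  unfolding ldim_f_def
proof (rule cInf_eq_minimum)
  show "real (card V) / 2 \<in> {(\<Sum>v\<in>V. f v) | f. local_resolving_function V E f}"
    using local_resolving_const_half by force
next
  fix s assume "s \<in> {(\<Sum>v\<in>V. f v) | f. local_resolving_function V E f}"
  then obtain f where lrf: "local_resolving_function V E f" and s: "s = (\<Sum>v\<in>V. f v)" by blast
  have "0 \<le> (\<Sum>x\<in>V. f x - 1/2)"
  proof (rule sum_nonneg_if_pairs_nonneg[OF finite_V, where k = "closed_nbhd V E"])
    show "\<exists>y\<in>V. y \<noteq> x \<and> closed_nbhd V E y = closed_nbhd V E x" if "x \<in> V" for x
      using twins that unfolding has_true_twin_def by metis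
    show "0 \<le> f x - 1/2 + (f y - 1/2)"
      if "x \<in> V" "y \<in> V" "x \<noteq> y" "closed_nbhd V E x = closed_nbhd V E y" for x y
      using true_twins_weight[OF lrf that] by simp
  qed
  then show "real (card V) / 2 \<le> s" using s by (simp add: sum_subtractf)
qed

end

lemma closed_nbhd_glex:
  assumes "complete_graph (fst (I v)) (snd (I v))" "v \<in> VH" "w \<in> fst (I v)"
  shows "closed_nbhd (glex_verts VH I) (glex_edge VH EH I) (v, w)
           = {p \<in> glex_verts VH I. EH v (fst p) \<or> fst p = v}"
proof -
  have adj: "snd (I v) w b \<longleftrightarrow> b \<noteq> w" if "b \<in> fst (I v)" for b
    using assms(1,3) that unfolding complete_graph_def simple_graph_def by blast
  have "(v, w) \<in> glex_verts VH I" using assms(2,3) unfolding glex_verts_def by simp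
  then show ?thesis
    unfolding closed_nbhd_def glex_edge_def using adj by (auto simp: glex_verts_def)
qed

lemma glex_has_true_twin:
  assumes "complete_graph (fst (I v)) (snd (I v))" "card (fst (I v)) \<ge> 2"
    and "v \<in> VH" "w \<in> fst (I v)"
  shows "has_true_twin (glex_verts VH I) (glex_edge VH EH I) (v, w)"
proof -
  have "finite (fst (I v))" using assms(2) card.infinite by fastforce
  then have "\<exists>a\<in>fst (I v). \<exists>b\<in>fst (I v). a \<noteq> b"
    using card_le_Suc0_iff_eq[of "fst (I v)"] assms(2) by auto
  then obtain w' where "w' \<in> fst (I v)" "w' \<noteq> w" by blast
  then have "(v, w') \<in> glex_verts VH I" "(v, w') \<noteq> (v, w)"
    using assms(3) unfolding glex_verts_def by auto
  moreover have "closed_nbhd (glex_verts VH I) (glex_edge VH EH I) (v, w)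
      = closed_nbhd (glex_verts VH I) (glex_edge VH EH I) (v, w')"
    using closed_nbhd_glex[where I = I and v = v and VH = VH and EH = EH, OF assms(1,3)]
      assms(4) \<open>w' \<in> fst (I v)\<close> by simp
  ultimately show ?thesis unfolding has_true_twin_def by blast
qed

lemma image_closed_nbhd_iso:
  assumes bij: "bij_betw \<phi> V V'" and edges: "\<forall>x\<in>V. \<forall>y\<in>V. E x y \<longleftrightarrow> E' (\<phi> x) (\<phi> y)"
    and "x \<in> V"
  shows "\<phi> ` closed_nbhd V E x = closed_nbhd V' E' (\<phi> x)"
proof -
  have "\<phi> ` {y \<in> V. E x y} = {y' \<in> V'. E' (\<phi> x) y'}"
  proof (intro equalityI subsetI)
    fix y' assume "y' \<in> \<phi> ` {y \<in> V. E x y}"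
    then show "y' \<in> {y' \<in> V'. E' (\<phi> x) y'}"
      using bij_betwE[OF bij] edges \<open>x \<in> V\<close> by blast
  next
    fix y' assume y': "y' \<in> {y' \<in> V'. E' (\<phi> x) y'}"
    then obtain y where "y \<in> V" "y' = \<phi> y" using bij_betw_imp_surj_on[OF bij] by blast
    then show "y' \<in> \<phi> ` {y \<in> V. E x y}" using y' edges \<open>x \<in> V\<close> by blast
  qed
  then show ?thesis unfolding closed_nbhd_def by simp
qed

lemma graph_iso_has_true_twin:
  assumes iso: "graph_iso V E V' E'" and twins': "\<forall>y\<in>V'. has_true_twin V' E' y"
    and "x \<in> V"
  shows "has_true_twin V E x"
proof -
  obtain \<phi> where bij: "bij_betw \<phi> V V'" and edges: "\<forall>x\<in>V. \<forall>y\<in>V. E x y \<longleftrightarrow> E' (\<phi> x) (\<phi> y)"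
    using iso unfolding graph_iso_def by blast
  have "\<phi> x \<in> V'" using bij \<open>x \<in> V\<close> bij_betwE by blast
  then obtain y' where "y' \<in> V'" "y' \<noteq> \<phi> x" "closed_nbhd V' E' (\<phi> x) = closed_nbhd V' E' y'"
    using twins' unfolding has_true_twin_def by blast
  moreover obtain y where y: "y \<in> V" "\<phi> y = y'"
    using bij_betw_imp_surj_on[OF bij] \<open>y' \<in> V'\<close> by blast
  ultimately have "y \<noteq> x" "\<phi> ` closed_nbhd V E x = \<phi> ` closed_nbhd V E y"
    using image_closed_nbhd_iso[OF bij edges] \<open>x \<in> V\<close> by auto
  moreover have "closed_nbhd V E z \<subseteq> V" if "z \<in> V" for z
    using that unfolding closed_nbhd_def by auto
  ultimately have "closed_nbhd V E x = closed_nbhd V E y"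
    using inj_on_image_eq_iff[OF bij_betw_imp_inj_on[OF bij]] \<open>x \<in> V\<close> \<open>y \<in> V\<close>
    by simp
  then show ?thesis using \<open>y \<in> V\<close> \<open>y \<noteq> x\<close> unfolding has_true_twin_def by blast
qed

definition quotient_edge :: "'a set \<Rightarrow> ('a \<Rightarrow> 'a \<Rightarrow> bool) \<Rightarrow> ('a \<Rightarrow> 'b) \<Rightarrow> 'b \<Rightarrow> 'b \<Rightarrow> bool"
  where "quotient_edge V E q i j \<longleftrightarrow> i \<noteq> j \<and> (\<exists>x\<in>V. \<exists>y\<in>V. q x = i \<and> q y = j \<and> E x y)"

definition complete_graph_on :: "'c set \<Rightarrow> 'c set \<times> ('c \<Rightarrow> 'c \<Rightarrow> bool)"
  where "complete_graph_on C = (C, \<lambda>a b. a \<in> C \<and> b \<in> C \<and> a \<noteq> b)"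

lemma complete_graph_complete_graph_on:
  "finite C \<Longrightarrow> complete_graph (fst (complete_graph_on C)) (snd (complete_graph_on C))"
  unfolding complete_graph_on_def complete_graph_def simple_graph_def by auto

context sgraph
begin

lemma simple_graph_quotient: "simple_graph (q ` V) (quotient_edge V E q)"
  unfolding simple_graph_def quotient_edge_def using finite_V edge_sym by blast

lemma walk_quotient:
  "walk V E n x y \<Longrightarrow> \<exists>m. walk (q ` V) (quotient_edge V E q) m (q x) (q y)"
proof (induction n arbitrary: x)
  case 0
  then have "walk (q ` V) (quotient_edge V E q) 0 (q x) (q y)" by (auto simp: walk_0_iff)
  then show ?case by blast
next
  case (Suc n)
  then obtain z where xz: "E x z" and "walk V E n z y" using walk_Suc_iff by blast
  then obtain m where m: "walk (q ` V) (quotient_edge V E q) m (q z) (q y)"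
    using Suc.IH by blast
  show ?case
  proof (cases "q x = q z")
    case True
    then show ?thesis using m by auto
  next
    case False
    moreover have "x \<in> V" "z \<in> V" using edge_in_V[OF xz] by auto
    ultimately have "quotient_edge V E q (q x) (q z)"
      unfolding quotient_edge_def using xz by (intro conjI bexI[of _ x] bexI[of _ z]) auto
    moreover have "walk (q ` V) (quotient_edge V E q) (Suc m) (q x) (q y) \<longleftrightarrow>
        (\<exists>i. quotient_edge V E q (q x) i \<and> walk (q ` V) (quotient_edge V E q) m i (q y))"
      by (rule sgraph.walk_Suc_iff[OF sgraph.intro[OF simple_graph_quotient]])
    ultimately have "walk (q ` V) (quotient_edge V E q) (Suc m) (q x) (q y)"
      using m by blast
    then show ?thesis by blast
  qed
qed

lemma graph_iso_twin_quotient: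
  fixes h :: "'a \<Rightarrow> 'c" and q :: "'a \<Rightarrow> 'b"
  assumes h: "inj_on h V"
    and q: "\<And>x y. x \<in> V \<Longrightarrow> y \<in> V \<Longrightarrow> q x = q y \<longleftrightarrow> closed_nbhd V E x = closed_nbhd V E y"
  defines "I \<equiv> \<lambda>i. complete_graph_on (h ` {x \<in> V. q x = i})"
  shows "graph_iso V E (glex_verts (q ` V) I) (glex_edge (q ` V) (quotient_edge V E q) I)"
  unfolding graph_iso_def
proof (intro exI conjI)
  let ?\<phi> = "\<lambda>x. (q x, h x)"
  have verts: "glex_verts (q ` V) I = ?\<phi> ` V"
  proof (intro equalityI subsetI)
    fix p assume "p \<in> glex_verts (q ` V) I"
    then obtain x where "x \<in> V" "p = (q x, h x)"
      unfolding glex_verts_def I_def complete_graph_on_def by fastforce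
    then show "p \<in> ?\<phi> ` V" by blast
  qed (auto simp: glex_verts_def I_def complete_graph_on_def)
  then show "bij_betw ?\<phi> V (glex_verts (q ` V) I)"
    unfolding bij_betw_def inj_on_def using inj_on_eq_iff[OF h] by auto
  show "\<forall>x\<in>V. \<forall>y\<in>V. E x y \<longleftrightarrow> glex_edge (q ` V) (quotient_edge V E q) I (?\<phi> x) (?\<phi> y)"
  proof (intro ballI)
    fix x y assume "x \<in> V" "y \<in> V"
    have "glex_edge (q ` V) (quotient_edge V E q) I (?\<phi> x) (?\<phi> y) \<longleftrightarrow>
          quotient_edge V E q (q x) (q y) \<or> (q x = q y \<and> x \<noteq> y)"
      using verts \<open>x \<in> V\<close> \<open>y \<in> V\<close> inj_on_eq_iff[OF h]
      unfolding glex_edge_def I_def complete_graph_on_def by auto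
    also have "\<dots> \<longleftrightarrow> E x y"
    proof (cases "q x = q y")
      case True
      then have "closed_nbhd V E x = closed_nbhd V E y" using q \<open>x \<in> V\<close> \<open>y \<in> V\<close> by blast
      then have "x \<noteq> y \<longleftrightarrow> E x y" using true_twins_adjacent edge_irrefl by blast
      with True show ?thesis unfolding quotient_edge_def by simp
    next
      case False
      have "E x y" if "x' \<in> V" "y' \<in> V" "q x' = q x" "q y' = q y" "E x' y'" for x' y'
        by (rule edge_true_twins_transfer[OF \<open>E x' y'\<close>]) (use q that False \<open>x \<in> V\<close> \<open>y \<in> V\<close> in auto)
      then show ?thesis using False \<open>x \<in> V\<close> \<open>y \<in> V\<close> unfolding quotient_edge_def by blast
    qed
    finally show "E x y \<longleftrightarrow> glex_edge (q ` V) (quotient_edge V E q) I (?\<phi> x) (?\<phi> y)" by simp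
  qed
qed

end

lemma (in cgraph) connected_graph_quotient: "connected_graph (q ` V) (quotient_edge V E q)"
  using connected simple_graph_quotient walk_quotient unfolding connected_graph_def by blast

lemma (in cgraph) twin_quotient_glex:
  assumes twins: "\<forall>u\<in>V. has_true_twin V E u"
  shows "\<exists>(VH :: nat set) EH (I :: nat \<Rightarrow> nat set \<times> (nat \<Rightarrow> nat \<Rightarrow> bool)).
           connected_graph VH EH \<and>
           (\<forall>v\<in>VH. complete_graph (fst (I v)) (snd (I v)) \<and> card (fst (I v)) \<ge> 2) \<and>
           graph_iso V E (glex_verts VH I) (glex_edge VH EH I)"
proof -
  obtain h :: "'a \<Rightarrow> nat" where h: "inj_on h V"
    using finite_imp_inj_to_nat_seg[OF finite_V] by metis
  obtain c :: "'a set \<Rightarrow> nat" where c: "inj_on c (closed_nbhd V E ` V)"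
    using finite_imp_inj_to_nat_seg[of "closed_nbhd V E ` V"] finite_V by blast
  define q where "q x = c (closed_nbhd V E x)" for x
  have q: "q x = q y \<longleftrightarrow> closed_nbhd V E x = closed_nbhd V E y" if "x \<in> V" "y \<in> V" for x y
    unfolding q_def using inj_on_eq_iff[OF c] that by blast
  define I where "I i = complete_graph_on (h ` {x \<in> V. q x = i})" for i
  have "complete_graph (fst (I i)) (snd (I i)) \<and> card (fst (I i)) \<ge> 2" if "i \<in> q ` V" for i
  proof -
    let ?C = "h ` {x \<in> V. q x = i}"
    obtain x where "x \<in> V" "i = q x" using \<open>i \<in> q ` V\<close> by blast
    moreover obtain y where "y \<in> V" "y \<noteq> x" "closed_nbhd V E x = closed_nbhd V E y"
      using twins \<open>x \<in> V\<close> unfolding has_true_twin_def by blast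
    ultimately have "{h x, h y} \<subseteq> ?C" "h x \<noteq> h y"
      using q inj_on_eq_iff[OF h] by auto
    moreover have "finite ?C" using finite_V by simp
    ultimately have "2 \<le> card ?C" using card_mono[of ?C "{h x, h y}"] by simp
    then show ?thesis
      using complete_graph_complete_graph_on[OF \<open>finite ?C\<close>]
      unfolding I_def by (simp add: complete_graph_on_def)
  qed
  moreover have "graph_iso V E (glex_verts (q ` V) I) (glex_edge (q ` V) (quotient_edge V E q) I)"
    unfolding I_def by (rule graph_iso_twin_quotient[OF h q])
  ultimately show ?thesis using connected_graph_quotient by blast
qed

theorem theorem2p3:
  fixes V :: "'a set" and E :: "'a \<Rightarrow> 'a \<Rightarrow> bool"
  assumes "connected_graph V E" and "card V \<ge> 2"
  shows "(ldim_f V E = real (card V) / 2 \<longleftrightarrow>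
            (\<forall>u\<in>V. \<exists>v\<in>V. v \<noteq> u \<and> closed_nbhd V E u = closed_nbhd V E v))
       \<and> ((\<forall>u\<in>V. \<exists>v\<in>V. v \<noteq> u \<and> closed_nbhd V E u = closed_nbhd V E v) \<longleftrightarrow>
            (\<exists>(VH :: nat set) EH (I :: nat \<Rightarrow> nat set \<times> (nat \<Rightarrow> nat \<Rightarrow> bool)).
               connected_graph VH EH \<and>
               (\<forall>v\<in>VH. complete_graph (fst (I v)) (snd (I v)) \<and> card (fst (I v)) \<ge> 2) \<and>
               graph_iso V E (glex_verts VH I) (glex_edge VH EH I)))"
proof -
  interpret cgraph V E by (rule cgraph.intro) (fact assms(1))
  have half_iff_twins: "ldim_f V E = real (card V) / 2 \<longleftrightarrow> (\<forall>u\<in>V. has_true_twin V E u)"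
    using ldim_f_eq_if_all_twins ldim_f_less_if_twinless by fastforce
  have twins_iff_glex: "(\<forall>u\<in>V. has_true_twin V E u) \<longleftrightarrow>
      (\<exists>(VH :: nat set) EH (I :: nat \<Rightarrow> nat set \<times> (nat \<Rightarrow> nat \<Rightarrow> bool)).
         connected_graph VH EH \<and>
         (\<forall>v\<in>VH. complete_graph (fst (I v)) (snd (I v)) \<and> card (fst (I v)) \<ge> 2) \<and>
         graph_iso V E (glex_verts VH I) (glex_edge VH EH I))" (is "_ \<longleftrightarrow> ?glex")
  proof
    assume "\<forall>u\<in>V. has_true_twin V E u"
    then show ?glex by (rule twin_quotient_glex)
  next
    assume ?glex
    then obtain VH EH and I :: "nat \<Rightarrow> nat set \<times> (nat \<Rightarrow> nat \<Rightarrow> bool)"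
      where fibres: "\<forall>v\<in>VH. complete_graph (fst (I v)) (snd (I v)) \<and> card (fst (I v)) \<ge> 2"
        and iso: "graph_iso V E (glex_verts VH I) (glex_edge VH EH I)"
      by blast
    have "\<forall>p\<in>glex_verts VH I. has_true_twin (glex_verts VH I) (glex_edge VH EH I) p"
      using fibres glex_has_true_twin[of I] unfolding glex_verts_def by blast
    then show "\<forall>u\<in>V. has_true_twin V E u" using graph_iso_has_true_twin[OF iso] by blast
  qed
  show ?thesis using half_iff_twins twins_iff_glex unfolding has_true_twin_def by simp
qed

end
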